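(* Fix one of the two variants $\sharp\in\{\text{lumped},\text{exact}\}$ described in the context. Let $T>0$, and let $\vec X^h\in C^1([0,T];\underline V^h)$ with $\vec X^h(t)\in\underline V^h_{\partial_0}$, $|\vec X^h_\rho(t)|>0$ a.e., and $\vec X^h(\rho,t)\cdot\vec e_1>0$ for $\rho\in\overline I\setminus\partial_0I$, $t\in[0,T]$; assume $\vec X^h_t(t)\in\underline V^h_\partial$ for all $t\in(0,T]$. (i) If $\kappa^h(t)\in W_\sharp$ and for all $t\in(0,T]$ $$\big((\vec X^h\cdot\vec e_1)\vec X^h_t,\chi\,\vec\nu^h|\vec X^h_\rho|\big)_\sharp=\big(\vec X^h\cdot\vec e_1\,\kappa^h,\chi|\vec X^h_\rho|\big)_\sharp\ \ \forall\chi\in W_\sharp,$$ $$\big(\vec X^h\cdot\vec e_1\,\kappa^h\vec\nu^h,\vec\eta|\vec X^h_\rho|\big)_\sharp+\big(\vec\eta\cdot\vec e_1,|\vec X^h_\rho|\big)+\big((\vec X^h\cdot\vec e_1)\vec X^h_\rho,\vec\eta_\rho|\vec X^h_\rho|^{-1}\big)=-\sum_{i=1}^2\sum_{p\in\partial_iI}\widehat\varrho^{(p)}(\vec X^h(p,t)\cdot\vec e_1)\vec\eta(p)\cdot\vec e_{3-i}\ \ \forall\vec\eta\in\underline V^h_\partial,$$ then $-\frac1{2\pi}\frac{d}{dt}E(\vec X^h(t))=\big(\vec X^h\cdot\vec e_1\,|\kappa^h|^2,|\vec X^h_\rho|\big)_\sharp\ge0$. (ii) If $\vec\kappa^h(t)\in[W_\sharp]^2$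 and for all $t\in(0,T]$ the same two equations hold with $\kappa^h\vec\nu^h$ replaced by $\vec\kappa^h$ in the second, and the first replaced by $\big((\vec X^h\cdot\vec e_1)\vec X^h_t,\vec\chi|\vec X^h_\rho|\big)_\sharp=\big((\vec X^h\cdot\vec e_1)\vec\kappa^h,\vec\chi|\vec X^h_\rho|\big)_\sharp$ for all $\vec\chi\in[W_\sharp]^2$, then $-\frac1{2\pi}\frac{d}{dt}E(\vec X^h(t))=\big(\vec X^h\cdot\vec e_1\,|\vec\kappa^h|^2,|\vec X^h_\rho|\big)_\sharp\ge0$.
   Context: Setup. $\vec e_1=(1,0)^T$, $\vec e_2=(0,1)^T$; "$\cdot$" is the Euclidean inner product. $I$ is either the periodic interval $\mathbb R/\mathbb Z$ (with $\partial I=\emptyset$) or $I=(0,1)$ (with $\partial I=\{0,1\}$). $\partial I=\partial_DI\cup\partial_0I\cup\partial_1I\cup\partial_2I$ is a given disjoint partition, and $\widehat\varrho^{(p)}\in\mathbb R$, $p\in\{0,1\}$, are given constants. Let $J\ge3$, $h=1/J$, $q_j=jh$ ($j=0,\dots,J$; $q_0=q_J$ identified in the periodic case). $V^h$ is the space of continuous functions on $\overline I$ (periodic if $I=\mathbb R/\mathbb Z$) that are affine on each $[q_{j-1},q_j]$; $\underline V^h=[V^h]^2$; $\underline V^h_{\partial_0}=\{\vec\eta\in\underline V^h:\vec\eta(\rho)\cdot\vec e_1=0\ \forall\rho\in\partial_0I\}$; $\underline V^h_\partial=\{\vec\eta\in\underline V^h_{\partial_0}:\vec\eta(\rho)\cdot\vec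 e_i=0\ \forall\rho\in\partial_iI,\ i=1,2;\ \vec\eta(\rho)=\vec0\ \forall\rho\in\partial_DI\}$; $W^h_{\partial_0}=\{\chi\in V^h:\chi(\rho)=0\ \forall\rho\in\partial_0I\}$. $(\cdot,\cdot)$ is the $L^2(I)$ inner product, and for piecewise continuous $f,g$ the mass-lumped product is $(f,g)^h=\tfrac h2\sum_{j=1}^J[(fg)(q_j^-)+(fg)(q_{j-1}^+)]$. Two variants: "lumped": $(\cdot,\cdot)_\sharp=(\cdot,\cdot)^h$, $W_\sharp=W^h_{\partial_0}$; "exact": $(\cdot,\cdot)_\sharp=(\cdot,\cdot)$, $W_\sharp=V^h$. $\vec\nu^h=-[\vec X^h_\rho]^\perp/|\vec X^h_\rho|$ with $(a,b)^\perp=(b,-a)$. The discrete energy of $\vec X\in\underline V^h$ is $E(\vec X)=2\pi(\vec X\cdot\vec e_1,|\vec X_\rho|)+2\pi\sum_{p\in\partial_1I}\widehat\varrho^{(p)}(\vec X(p)\cdot\vec e_1)(\vec X(p)\cdot\vec e_2)+\pi\sum_{p\in\partial_2I}\widehat\varrho^{(p)}(\vec X(p)\cdot\vec e_1)^2$. *)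

theory Defs
  imports "HOL-Analysis.Analysis"
begin

text \<open>The parameter interval is [0,1];
  in the periodic case (per = True) nodal vectors satisfy x J = x 0.
  Boundary points are the reals 0 and 1; nodes are q_j = j/J, j = 0..J.\<close>

definition e1 :: "real \<times> real" where "e1 = (1, 0)"
definition e2 :: "real \<times> real" where "e2 = (0, 1)"

definition perp :: "real \<times> real \<Rightarrow> real \<times> real" where
  "perp v = (snd v, - fst v)"

definition node :: "nat \<Rightarrow> nat \<Rightarrow> real" where
  "node J j = real j / real J"

text \<open>Restriction of the piecewise affine interpolant of nodal values x to the
  element [q_{j-1}, q_j] (j = 1..J), as an affine function of rho.\<close>
definition elt :: "nat \<Rightarrow> (nat \<Rightarrow> 'a::real_vector) \<Rightarrow> nat \<Rightarrow> real \<Rightarrow> 'a" where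
  "elt J x j \<rho> = x (j - 1) + (real J * \<rho> - real (j - 1)) *\<^sub>R (x j - x (j - 1))"

definition eltd :: "nat \<Rightarrow> (nat \<Rightarrow> 'a::real_vector) \<Rightarrow> nat \<Rightarrow> 'a" where
  "eltd J x j = real J *\<^sub>R (x j - x (j - 1))"

definition pl :: "nat \<Rightarrow> (nat \<Rightarrow> 'a::real_vector) \<Rightarrow> real \<Rightarrow> 'a" where
  "pl J x \<rho> = elt J x (max 1 (nat \<lceil>real J * \<rho>\<rceil>)) \<rho>"

text \<open>Piecewise continuous functions are represented elementwise:
  f j is the (continuous) restriction of f to the closed element [q_{j-1}, q_j],
  so f j (q_j) = f(q_j^-) and f j (q_{j-1}) = f(q_{j-1}^+).\<close>

definition ip :: "nat \<Rightarrow> (nat \<Rightarrow> real \<Rightarrow> 'a::real_inner) \<Rightarrow> (nat \<Rightarrow> real \<Rightarrow> 'a) \<Rightarrow> real" where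
  "ip J f g = (\<Sum>j=1..J. integral {node J (j - 1)..node J j} (\<lambda>\<rho>. inner (f j \<rho>) (g j \<rho>)))"

definition ipl :: "nat \<Rightarrow> (nat \<Rightarrow> real \<Rightarrow> 'a::real_inner) \<Rightarrow> (nat \<Rightarrow> real \<Rightarrow> 'a) \<Rightarrow> real" where
  "ipl J f g = (1 / real J) / 2 * (\<Sum>j=1..J.
      inner (f j (node J j)) (g j (node J j)) + inner (f j (node J (j - 1))) (g j (node J (j - 1))))"

definition ipS :: "bool \<Rightarrow> nat \<Rightarrow> (nat \<Rightarrow> real \<Rightarrow> 'a::real_inner) \<Rightarrow> (nat \<Rightarrow> real \<Rightarrow> 'a) \<Rightarrow> real" where
  "ipS lumped J f g = (if lumped then ipl J f g else ip J f g)"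

definition Vh :: "bool \<Rightarrow> nat \<Rightarrow> (nat \<Rightarrow> 'a::real_vector) set" where
  "Vh per J = {x. per \<longrightarrow> x J = x 0}"

definition Vd0 :: "bool \<Rightarrow> nat \<Rightarrow> real set \<Rightarrow> (nat \<Rightarrow> real \<times> real) set" where
  "Vd0 per J d0 = {\<eta> \<in> Vh per J. \<forall>\<rho>\<in>d0. pl J \<eta> \<rho> \<bullet> e1 = 0}"

definition Vdd :: "bool \<Rightarrow> nat \<Rightarrow> real set \<Rightarrow> real set \<Rightarrow> real set \<Rightarrow> real set
    \<Rightarrow> (nat \<Rightarrow> real \<times> real) set" where
  "Vdd per J dD d0 d1 d2 = {\<eta> \<in> Vd0 per J d0.
      (\<forall>\<rho>\<in>d1. pl J \<eta> \<rho> \<bullet> e1 = 0) \<and> (\<forall>\<rho>\<in>d2. pl J \<eta> \<rho> \<bullet> e2 = 0) \<and> (\<forall>\<rho>\<in>dD. pl J \<eta> \<rho> = 0)}"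

definition W0 :: "bool \<Rightarrow> nat \<Rightarrow> real set \<Rightarrow> (nat \<Rightarrow> real) set" where
  "W0 per J d0 = {\<zeta> \<in> Vh per J. \<forall>\<rho>\<in>d0. pl J \<zeta> \<rho> = 0}"

definition WS :: "bool \<Rightarrow> bool \<Rightarrow> nat \<Rightarrow> real set \<Rightarrow> (nat \<Rightarrow> real) set" where
  "WS lumped per J d0 = (if lumped then W0 per J d0 else Vh per J)"

definition boundary_partition :: "bool \<Rightarrow> real set \<Rightarrow> real set \<Rightarrow> real set \<Rightarrow> real set \<Rightarrow> bool" where
  "boundary_partition per dD d0 d1 d2 \<longleftrightarrow>
     dD \<union> d0 \<union> d1 \<union> d2 = (if per then {} else {0, 1}) \<and>
     dD \<inter> d0 = {} \<and> dD \<inter> d1 = {} \<and> dD \<inter> d2 = {} \<and>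
     d0 \<inter> d1 = {} \<and> d0 \<inter> d2 = {} \<and> d1 \<inter> d2 = {}"

definition nuh :: "nat \<Rightarrow> (nat \<Rightarrow> real \<times> real) \<Rightarrow> nat \<Rightarrow> real \<times> real" where
  "nuh J X j = - ((1 / norm (eltd J X j)) *\<^sub>R perp (eltd J X j))"

definition energy :: "nat \<Rightarrow> real set \<Rightarrow> real set \<Rightarrow> (real \<Rightarrow> real) \<Rightarrow> (nat \<Rightarrow> real \<times> real) \<Rightarrow> real" where
  "energy J d1 d2 rh X =
     2 * pi * ip J (\<lambda>j \<rho>. elt J X j \<rho> \<bullet> e1) (\<lambda>j \<rho>. norm (eltd J X j))
     + 2 * pi * (\<Sum>p\<in>d1. rh p * (pl J X p \<bullet> e1) * (pl J X p \<bullet> e2))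
     + pi * (\<Sum>p\<in>d2. rh p * (pl J X p \<bullet> e1)\<^sup>2)"

text \<open>Right-hand side of the second (curvature/position) equation, and the
  two exact-product terms on its left-hand side.\<close>
definition bdry_rhs :: "nat \<Rightarrow> real set \<Rightarrow> real set \<Rightarrow> (real \<Rightarrow> real) \<Rightarrow> (nat \<Rightarrow> real \<times> real)
    \<Rightarrow> (nat \<Rightarrow> real \<times> real) \<Rightarrow> real" where
  "bdry_rhs J d1 d2 rh X \<eta> =
     - ((\<Sum>p\<in>d1. rh p * (pl J X p \<bullet> e1) * (pl J \<eta> p \<bullet> e2))
      + (\<Sum>p\<in>d2. rh p * (pl J X p \<bullet> e1) * (pl J \<eta> p \<bullet> e1)))"

definition stiff :: "nat \<Rightarrow> (nat \<Rightarrow> real \<times> real) \<Rightarrow> (nat \<Rightarrow> real \<times> real) \<Rightarrow> real" where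
  "stiff J X \<eta> =
     ip J (\<lambda>j \<rho>. elt J \<eta> j \<rho> \<bullet> e1) (\<lambda>j \<rho>. norm (eltd J X j))
     + ip J (\<lambda>j \<rho>. (elt J X j \<rho> \<bullet> e1) *\<^sub>R eltd J X j)
            (\<lambda>j \<rho>. (1 / norm (eltd J X j)) *\<^sub>R eltd J \<eta> j)"

end

theory Submission imports Defs begin

text \<open>The energy is the trapezoidal sum of the elementwise constant length density
  against the affine radius X \<bullet> e1, plus boundary terms, so its time derivative is
  2 pi (stiff X Xt - bdry_rhs X Xt); in the product rule for the boundary terms on d1 one
  half drops out because Xt \<bullet> e1 vanishes there.  Testing the curvature equation with \<kappa> and the
  position equation with Xt, the two coupling terms agree by symmetry of the inner product,
  so the derivative is -2 pi times the radius-weighted squared curvature, which is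
  nonnegative since X \<bullet> e1 is a convex combination of nonnegative nodal values.\<close>

lemma inner_e1 [simp]: "v \<bullet> e1 = fst v"
  by (cases v) (simp add: e1_def)

lemma inner_e2 [simp]: "v \<bullet> e2 = snd v"
  by (cases v) (simp add: e2_def)

lemma has_real_derivative_fst:
  "(g has_vector_derivative v) F \<Longrightarrow> ((\<lambda>s. fst (g s)) has_real_derivative fst v) F"
  unfolding has_real_derivative_iff_has_vector_derivative
  by (rule bounded_linear.has_vector_derivative[OF bounded_linear_fst])

lemma has_real_derivative_snd:
  "(g has_vector_derivative v) F \<Longrightarrow> ((\<lambda>s. snd (g s)) has_real_derivative snd v) F"
  unfolding has_real_derivative_iff_has_vector_derivative
  by (rule bounded_linear.has_vector_derivative[OF bounded_linear_snd])

lemma has_real_derivative_norm: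
  fixes g :: "real \<Rightarrow> 'a::real_inner"
  assumes "(g has_vector_derivative v) (at t within S)" and "g t \<noteq> 0"
  shows "((\<lambda>s. norm (g s)) has_real_derivative (g t \<bullet> v / norm (g t))) (at t within S)"
proof -
  have "((\<lambda>s. norm (g s)) has_derivative (\<lambda>h. h * (v \<bullet> sgn (g t)))) (at t within S)"
    using has_derivative_compose[OF assms(1)[unfolded has_vector_derivative_def]
        has_derivative_norm[OF assms(2)]]
    by (simp add: o_def)
  moreover have "(\<lambda>h. h * (v \<bullet> sgn (g t))) = (\<lambda>h. (g t \<bullet> v / norm (g t)) * h)"
    by (simp add: fun_eq_iff sgn_div_norm inner_commute field_simps)
  ultimately show ?thesis
    by (simp only: has_field_derivative_def)
qed

lemma node_pred_le: "node J (j - 1) \<le> node J j"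
  by (simp add: node_def divide_right_mono)

lemma pl_node:
  assumes "J > 0" and "j \<le> J"
  shows "pl J x (node J j) = x j"
proof (cases "j = 0")
  case True
  then show ?thesis by (simp add: pl_def elt_def node_def)
next
  case False
  have "nat \<lceil>real J * (real j / real J)\<rceil> = j" using assms by simp
  with False assms show ?thesis by (simp add: pl_def elt_def node_def of_nat_diff max_def)
qed

lemma has_vector_derivative_pl:
  assumes "J > 0" and "p \<in> {0..1}"
    and "\<forall>j\<le>J. ((\<lambda>s. X s j) has_vector_derivative v j) (at t within S)"
  shows "((\<lambda>s. pl J (X s) p) has_vector_derivative pl J v p) (at t within S)"
proof -
  define k where "k = max 1 (nat \<lceil>real J * p\<rceil>)"
  have "real J * p \<le> real J" using assms(2) by (simp add: mult_left_le)
  then have "\<lceil>real J * p\<rceil> \<le> int J" by (simp add: ceiling_le_iff)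
  with assms(1,2) have "k \<le> J" by (auto simp: k_def)
  with assms(3) have Xk: "((\<lambda>s. X s k) has_vector_derivative v k) (at t within S)"
    and Xk1: "((\<lambda>s. X s (k - 1)) has_vector_derivative v (k - 1)) (at t within S)"
    by auto
  show ?thesis unfolding pl_def k_def[symmetric] elt_def
    by (rule derivative_eq_intros Xk Xk1 refl | simp)+
qed

lemma elt_fst: "fst (elt J x j \<rho>) = elt J (\<lambda>i. fst (x i)) j \<rho>"
  by (simp add: elt_def)

lemma integral_elt:
  fixes y :: "nat \<Rightarrow> real"
  assumes "J > 0" and "j \<ge> 1"
  shows "integral {node J (j - 1)..node J j} (elt J y j) = (y (j - 1) + y j) / (2 * real J)"
proof -
  define k where "k = real (j - 1)"
  define F where "F \<rho> = y (j - 1) * \<rho> + (real J * \<rho>\<^sup>2 / 2 - k * \<rho>) * (y j - y (j - 1))" for \<rho>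
  have "(F has_vector_derivative elt J y j \<rho>) (at \<rho> within S)" for \<rho> S
    unfolding F_def elt_def k_def has_real_derivative_iff_has_vector_derivative[symmetric]
    by (rule derivative_eq_intros refl | simp add: algebra_simps)+
  then have "(elt J y j has_integral F (node J j) - F (node J (j - 1))) {node J (j - 1)..node J j}"
    by (intro fundamental_theorem_of_calculus node_pred_le)
  moreover have "F (node J j) - F (node J (j - 1)) = (y (j - 1) + y j) / (2 * real J)"
    using assms unfolding F_def node_def k_def
    by (simp add: of_nat_diff field_simps power2_eq_square)
  ultimately show ?thesis
    by (simp add: integral_unique)
qed

lemma ip_radius_elementwise_const:
  assumes "J > 0"
  shows "ip J (\<lambda>j \<rho>. elt J x j \<rho> \<bullet> e1) (\<lambda>j \<rho>. c j)
       = (\<Sum>j=1..J. c j * (fst (x (j - 1)) + fst (x j)) / (2 * real J))"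
  unfolding ip_def
proof (rule sum.cong[OF refl])
  fix j assume "j \<in> {1..J}"
  then have "integral {node J (j - 1)..node J j} (\<lambda>\<rho>. elt J (\<lambda>i. fst (x i)) j \<rho> * c j)
      = c j * (fst (x (j - 1)) + fst (x j)) / (2 * real J)"
    using assms integral_elt[of J j "\<lambda>i. fst (x i)"] by simp
  then show "integral {node J (j - 1)..node J j} (\<lambda>\<rho>. (elt J x j \<rho> \<bullet> e1) \<bullet> c j)
      = c j * (fst (x (j - 1)) + fst (x j)) / (2 * real J)"
    by (simp add: elt_fst)
qed

lemma energy_eq_nodal:
  assumes "J > 0"
  shows "energy J d1 d2 rh x =
     2 * pi * (\<Sum>j=1..J. norm (eltd J x j) * (fst (x (j - 1)) + fst (x j)) / (2 * real J))
     + 2 * pi * (\<Sum>p\<in>d1. rh p * fst (pl J x p) * snd (pl J x p))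
     + pi * (\<Sum>p\<in>d2. rh p * (fst (pl J x p))\<^sup>2)"
  using ip_radius_elementwise_const[OF assms, of x "\<lambda>j. norm (eltd J x j)"]
  by (simp add: energy_def)

lemma stiff_eq_nodal:
  assumes "J > 0"
  shows "stiff J x v =
     (\<Sum>j=1..J. norm (eltd J x j) * (fst (v (j - 1)) + fst (v j)) / (2 * real J))
   + (\<Sum>j=1..J. (eltd J x j \<bullet> eltd J v j / norm (eltd J x j))
                 * (fst (x (j - 1)) + fst (x j)) / (2 * real J))"
proof -
  have "ip J (\<lambda>j \<rho>. (elt J x j \<rho> \<bullet> e1) *\<^sub>R eltd J x j) (\<lambda>j \<rho>. (1 / norm (eltd J x j)) *\<^sub>R eltd J v j)
     = ip J (\<lambda>j \<rho>. elt J x j \<rho> \<bullet> e1) (\<lambda>j \<rho>. eltd J x j \<bullet> eltd J v j / norm (eltd J x j))"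
    unfolding ip_def by (simp add: inner_scaleR_left inner_scaleR_right)
  then show ?thesis
    unfolding stiff_def using ip_radius_elementwise_const[OF assms] by simp
qed

lemma has_real_derivative_bulk_energy:
  fixes X :: "real \<Rightarrow> nat \<Rightarrow> real \<times> real"
  assumes J: "J > 0"
    and X: "\<forall>j\<le>J. ((\<lambda>s. X s j) has_vector_derivative v j) (at t within S)"
    and nondeg: "\<forall>j\<in>{1..J}. X t j \<noteq> X t (j - 1)"
  shows "((\<lambda>s. \<Sum>j=1..J. norm (eltd J (X s) j) * (fst (X s (j - 1)) + fst (X s j)) / (2 * real J))
           has_real_derivative stiff J (X t) v) (at t within S)"
proof -
  have "((\<lambda>s. norm (eltd J (X s) j) * (fst (X s (j - 1)) + fst (X s j)) / (2 * real J))
        has_real_derivative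
          norm (eltd J (X t) j) * (fst (v (j - 1)) + fst (v j)) / (2 * real J)
          + (eltd J (X t) j \<bullet> eltd J v j / norm (eltd J (X t) j))
              * (fst (X t (j - 1)) + fst (X t j)) / (2 * real J)) (at t within S)"
    if j: "j \<in> {1..J}" for j
  proof -
    have Xj: "((\<lambda>s. X s j) has_vector_derivative v j) (at t within S)"
      and Xj1: "((\<lambda>s. X s (j - 1)) has_vector_derivative v (j - 1)) (at t within S)"
      using X j by auto
    have D: "((\<lambda>s. eltd J (X s) j) has_vector_derivative eltd J v j) (at t within S)"
      unfolding eltd_def by (rule derivative_eq_intros Xj Xj1 refl | simp)+
    have "eltd J (X t) j \<noteq> 0"
      using nondeg j J by (auto simp: eltd_def)
    then have length: "((\<lambda>s. norm (eltd J (X s) j)) has_real_derivative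
                    eltd J (X t) j \<bullet> eltd J v j / norm (eltd J (X t) j)) (at t within S)"
      by (rule has_real_derivative_norm[OF D])
    have radius: "((\<lambda>s. fst (X s (j - 1)) + fst (X s j)) has_real_derivative
                    fst (v (j - 1)) + fst (v j)) (at t within S)"
      by (intro DERIV_add has_real_derivative_fst Xj Xj1)
    show ?thesis
      using DERIV_cdivide[OF DERIV_mult[OF length radius], of "2 * real J"]
      by (simp add: add_divide_distrib algebra_simps)
  qed
  then show ?thesis
    unfolding stiff_eq_nodal[OF J] sum.distrib[symmetric] by (rule DERIV_sum)
qed

lemma energy_has_derivative:
  fixes X :: "real \<Rightarrow> nat \<Rightarrow> real \<times> real"
  assumes J: "J > 0"
    and X: "\<forall>j\<le>J. ((\<lambda>s. X s j) has_vector_derivative v j) (at t within S)"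
    and nondeg: "\<forall>j\<in>{1..J}. X t j \<noteq> X t (j - 1)"
    and d1: "d1 \<subseteq> {0..1}" and d2: "d2 \<subseteq> {0..1}"
    and v_d1: "\<forall>p\<in>d1. fst (pl J v p) = 0"
  shows "((\<lambda>s. energy J d1 d2 rh (X s)) has_real_derivative
           2 * pi * (stiff J (X t) v - bdry_rhs J d1 d2 rh (X t) v)) (at t within S)"
proof -
  have pl: "((\<lambda>s. pl J (X s) p) has_vector_derivative pl J v p) (at t within S)"
    if "p \<in> {0..1}" for p
    using has_vector_derivative_pl[OF J that X] .
  have "((\<lambda>s. rh p * (fst (pl J (X s) p) * snd (pl J (X s) p))) has_real_derivative
          rh p * fst (pl J (X t) p) * snd (pl J v p)) (at t within S)" if "p \<in> d1" for p
    using DERIV_cmult[OF DERIV_mult[OF has_real_derivative_fst has_real_derivative_snd]]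
      pl[of p] d1 v_d1 that
    by (fastforce simp: algebra_simps)
  then have D1: "((\<lambda>s. \<Sum>p\<in>d1. rh p * fst (pl J (X s) p) * snd (pl J (X s) p)) has_real_derivative
          (\<Sum>p\<in>d1. rh p * fst (pl J (X t) p) * snd (pl J v p))) (at t within S)"
    by (simp add: mult.assoc DERIV_sum)
  have "((\<lambda>s. rh p * (fst (pl J (X s) p))\<^sup>2) has_real_derivative
          2 * (rh p * fst (pl J (X t) p) * fst (pl J v p))) (at t within S)" if "p \<in> d2" for p
    using pl[of p] d2 that
    by (auto intro!: derivative_eq_intros has_real_derivative_fst simp: algebra_simps)
  then have D2: "((\<lambda>s. \<Sum>p\<in>d2. rh p * (fst (pl J (X s) p))\<^sup>2) has_real_derivative
          2 * (\<Sum>p\<in>d2. rh p * fst (pl J (X t) p) * fst (pl J v p))) (at t within S)"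
    unfolding sum_distrib_left by (rule DERIV_sum)
  have rhs: "2 * pi * (stiff J (X t) v - bdry_rhs J d1 d2 rh (X t) v)
      = 2 * pi * stiff J (X t) v
        + 2 * pi * (\<Sum>p\<in>d1. rh p * fst (pl J (X t) p) * snd (pl J v p))
        + pi * (2 * (\<Sum>p\<in>d2. rh p * fst (pl J (X t) p) * fst (pl J v p)))"
    by (simp add: bdry_rhs_def algebra_simps)
  show ?thesis
    unfolding energy_eq_nodal[OF J] rhs
    by (intro DERIV_add DERIV_cmult D1 D2 has_real_derivative_bulk_energy J X nondeg)
qed

lemma elt_nonneg:
  fixes y :: "nat \<Rightarrow> real"
  assumes "J > 0" and "j \<ge> 1" and "y (j - 1) \<ge> 0" and "y j \<ge> 0"
    and "\<rho> \<in> {node J (j - 1)..node J j}"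
  shows "elt J y j \<rho> \<ge> 0"
proof -
  define \<theta> where "\<theta> = real J * \<rho> - real (j - 1)"
  have "0 \<le> \<theta>" "\<theta> \<le> 1"
    using assms by (auto simp: \<theta>_def node_def of_nat_diff field_simps)
  moreover have "elt J y j \<rho> = (1 - \<theta>) * y (j - 1) + \<theta> * y j"
    by (simp add: elt_def \<theta>_def algebra_simps)
  ultimately show ?thesis
    using assms by simp
qed

lemma radius_nonneg:
  assumes J: "J > 0" and x: "x \<in> Vd0 per J d0"
    and pos: "\<forall>\<rho>\<in>{0..1} - d0. pl J x \<rho> \<bullet> e1 > 0"
    and j: "j \<in> {1..J}" and \<rho>: "\<rho> \<in> {node J (j - 1)..node J j}"
  shows "0 \<le> elt J x j \<rho> \<bullet> e1"
proof -
  have nodal: "0 \<le> fst (x i)" if "i \<le> J" for i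
  proof (cases "node J i \<in> d0")
    case True
    with x pl_node[OF J that, of x] show ?thesis by (auto simp: Vd0_def)
  next
    case False
    moreover have "node J i \<in> {0..1}" using that J by (simp add: node_def)
    ultimately show ?thesis
      using pos pl_node[OF J that] by (metis DiffI inner_e1 less_imp_le)
  qed
  have "0 \<le> elt J (\<lambda>i. fst (x i)) j \<rho>"
    using j by (intro elt_nonneg[OF J _ _ _ \<rho>] nodal) auto
  then show ?thesis
    by (simp add: elt_fst)
qed

lemma ipS_cong:
  fixes f g :: "nat \<Rightarrow> real \<Rightarrow> 'a::real_inner" and f' g' :: "nat \<Rightarrow> real \<Rightarrow> 'b::real_inner"
  assumes "\<And>j \<rho>. f j \<rho> \<bullet> g j \<rho> = f' j \<rho> \<bullet> g' j \<rho>"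
  shows "ipS l J f g = ipS l J f' g'"
  using assms by (simp add: ipS_def ipl_def ip_def)

lemma ipS_nonneg:
  fixes f g :: "nat \<Rightarrow> real \<Rightarrow> real"
  assumes nonneg: "\<forall>j\<in>{1..J}. \<forall>\<rho>\<in>{node J (j - 1)..node J j}. 0 \<le> f j \<rho> * g j \<rho>"
    and cont: "\<forall>j\<in>{1..J}. continuous_on {node J (j - 1)..node J j} (\<lambda>\<rho>. f j \<rho> * g j \<rho>)"
  shows "0 \<le> ipS l J f g"
proof (cases l)
  case True
  have "0 \<le> (\<Sum>j=1..J. f j (node J j) * g j (node J j) + f j (node J (j - 1)) * g j (node J (j - 1)))"
    using nonneg node_pred_le by (intro sum_nonneg add_nonneg_nonneg) auto
  with True show ?thesis by (simp add: ipS_def ipl_def)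
next
  case False
  have "0 \<le> (\<Sum>j=1..J. integral {node J (j - 1)..node J j} (\<lambda>\<rho>. f j \<rho> * g j \<rho>))"
    using nonneg cont by (intro sum_nonneg integral_nonneg integrable_continuous_interval) auto
  with False show ?thesis by (simp add: ipS_def ip_def)
qed

lemma ipS_radius_weighted_nonneg:
  assumes J: "J > 0" and x: "x \<in> Vd0 per J d0"
    and pos: "\<forall>\<rho>\<in>{0..1} - d0. pl J x \<rho> \<bullet> e1 > 0"
    and c_nonneg: "\<And>j \<rho>. 0 \<le> c j \<rho>" and c_cont: "\<And>j. continuous_on UNIV (c j)"
  shows "0 \<le> ipS l J (\<lambda>j \<rho>. (elt J x j \<rho> \<bullet> e1) * c j \<rho>) (\<lambda>j \<rho>. norm (eltd J x j))"
proof (rule ipS_nonneg)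
  show "\<forall>j\<in>{1..J}. \<forall>\<rho>\<in>{node J (j - 1)..node J j}.
          0 \<le> (elt J x j \<rho> \<bullet> e1) * c j \<rho> * norm (eltd J x j)"
    using radius_nonneg[OF J x pos] c_nonneg by (intro ballI mult_nonneg_nonneg norm_ge_zero) auto
  show "\<forall>j\<in>{1..J}. continuous_on {node J (j - 1)..node J j}
          (\<lambda>\<rho>. (elt J x j \<rho> \<bullet> e1) * c j \<rho> * norm (eltd J x j))"
    using c_cont by (auto simp: elt_def intro!: continuous_intros intro: continuous_on_subset)
qed

lemma dissipation_scalar:
  fixes x v :: "nat \<Rightarrow> real \<times> real" and k :: "nat \<Rightarrow> real"
  assumes curvature:
      "ipS l J (\<lambda>j \<rho>. (elt J x j \<rho> \<bullet> e1) *\<^sub>R elt J v j \<rho>)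
               (\<lambda>j \<rho>. (elt J k j \<rho> * norm (eltd J x j)) *\<^sub>R nuh J x j)
     = ipS l J (\<lambda>j \<rho>. (elt J x j \<rho> \<bullet> e1) * elt J k j \<rho>)
               (\<lambda>j \<rho>. elt J k j \<rho> * norm (eltd J x j))"
    and position:
      "ipS l J (\<lambda>j \<rho>. ((elt J x j \<rho> \<bullet> e1) * elt J k j \<rho>) *\<^sub>R nuh J x j)
               (\<lambda>j \<rho>. norm (eltd J x j) *\<^sub>R elt J v j \<rho>)
       + stiff J x v = bdry_rhs J d1 d2 rh x v"
  shows "stiff J x v - bdry_rhs J d1 d2 rh x v
       = - ipS l J (\<lambda>j \<rho>. (elt J x j \<rho> \<bullet> e1) * (elt J k j \<rho>)\<^sup>2) (\<lambda>j \<rho>. norm (eltd J x j))"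
proof -
  have "ipS l J (\<lambda>j \<rho>. ((elt J x j \<rho> \<bullet> e1) * elt J k j \<rho>) *\<^sub>R nuh J x j)
                (\<lambda>j \<rho>. norm (eltd J x j) *\<^sub>R elt J v j \<rho>)
      = ipS l J (\<lambda>j \<rho>. (elt J x j \<rho> \<bullet> e1) *\<^sub>R elt J v j \<rho>)
                (\<lambda>j \<rho>. (elt J k j \<rho> * norm (eltd J x j)) *\<^sub>R nuh J x j)"
    by (rule ipS_cong) (simp add: inner_commute)
  moreover have "ipS l J (\<lambda>j \<rho>. (elt J x j \<rho> \<bullet> e1) * elt J k j \<rho>)
                         (\<lambda>j \<rho>. elt J k j \<rho> * norm (eltd J x j))
      = ipS l J (\<lambda>j \<rho>. (elt J x j \<rho> \<bullet> e1) * (elt J k j \<rho>)\<^sup>2) (\<lambda>j \<rho>. norm (eltd J x j))"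
    by (rule ipS_cong) (simp add: power2_eq_square)
  ultimately show ?thesis
    using curvature position by linarith
qed

lemma dissipation_vector:
  fixes x v k :: "nat \<Rightarrow> real \<times> real"
  assumes curvature:
      "ipS l J (\<lambda>j \<rho>. (elt J x j \<rho> \<bullet> e1) *\<^sub>R elt J v j \<rho>)
               (\<lambda>j \<rho>. norm (eltd J x j) *\<^sub>R elt J k j \<rho>)
     = ipS l J (\<lambda>j \<rho>. (elt J x j \<rho> \<bullet> e1) *\<^sub>R elt J k j \<rho>)
               (\<lambda>j \<rho>. norm (eltd J x j) *\<^sub>R elt J k j \<rho>)"
    and position:
      "ipS l J (\<lambda>j \<rho>. (elt J x j \<rho> \<bullet> e1) *\<^sub>R elt J k j \<rho>)
               (\<lambda>j \<rho>. norm (eltd J x j) *\<^sub>R elt J v j \<rho>)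
       + stiff J x v = bdry_rhs J d1 d2 rh x v"
  shows "stiff J x v - bdry_rhs J d1 d2 rh x v
       = - ipS l J (\<lambda>j \<rho>. (elt J x j \<rho> \<bullet> e1) * (norm (elt J k j \<rho>))\<^sup>2) (\<lambda>j \<rho>. norm (eltd J x j))"
proof -
  have "ipS l J (\<lambda>j \<rho>. (elt J x j \<rho> \<bullet> e1) *\<^sub>R elt J k j \<rho>)
                (\<lambda>j \<rho>. norm (eltd J x j) *\<^sub>R elt J v j \<rho>)
      = ipS l J (\<lambda>j \<rho>. (elt J x j \<rho> \<bullet> e1) *\<^sub>R elt J v j \<rho>)
                (\<lambda>j \<rho>. norm (eltd J x j) *\<^sub>R elt J k j \<rho>)"
    by (rule ipS_cong) (simp add: inner_commute)
  moreover have "ipS l J (\<lambda>j \<rho>. (elt J x j \<rho> \<bullet> e1) *\<^sub>R elt J k j \<rho>)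
                         (\<lambda>j \<rho>. norm (eltd J x j) *\<^sub>R elt J k j \<rho>)
      = ipS l J (\<lambda>j \<rho>. (elt J x j \<rho> \<bullet> e1) * (norm (elt J k j \<rho>))\<^sup>2) (\<lambda>j \<rho>. norm (eltd J x j))"
    by (rule ipS_cong) (simp add: power2_norm_eq_inner)
  ultimately show ?thesis
    using curvature position by linarith
qed

theorem mainTheorem9:
  fixes lumped per :: bool and J :: nat and dD d0 d1 d2 :: "real set" and rh :: "real \<Rightarrow> real"
    and T :: real and X Xt :: "real \<Rightarrow> nat \<Rightarrow> real \<times> real"
  assumes J3: "J \<ge> 3"
    and bp: "boundary_partition per dD d0 d1 d2"
    and T0: "T > 0"
    and Xderiv: "\<forall>j\<le>J. \<forall>t\<in>{0..T}.
                   ((\<lambda>s. X s j) has_vector_derivative Xt t j) (at t within {0..T})"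
    and Xtcont: "\<forall>j\<le>J. continuous_on {0..T} (\<lambda>t. Xt t j)"
    and XV: "\<forall>t\<in>{0..T}. X t \<in> Vd0 per J d0"
    and Xnondeg: "\<forall>t\<in>{0..T}. \<forall>j\<in>{1..J}. X t j \<noteq> X t (j - 1)"
    and Xpos: "\<forall>t\<in>{0..T}. \<forall>\<rho>\<in>{0..1} - d0. pl J (X t) \<rho> \<bullet> e1 > 0"
    and XtV: "\<forall>t\<in>{0<..T}. Xt t \<in> Vdd per J dD d0 d1 d2"
  shows
   "(\<forall>\<kappa> :: real \<Rightarrow> nat \<Rightarrow> real.
      (\<forall>t\<in>{0<..T}.
         \<kappa> t \<in> WS lumped per J d0 \<and>
         (\<forall>\<zeta>\<in>WS lumped per J d0.
            ipS lumped J (\<lambda>j \<rho>. (elt J (X t) j \<rho> \<bullet> e1) *\<^sub>R elt J (Xt t) j \<rho>)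
                         (\<lambda>j \<rho>. (elt J \<zeta> j \<rho> * norm (eltd J (X t) j)) *\<^sub>R nuh J (X t) j)
          = ipS lumped J (\<lambda>j \<rho>. (elt J (X t) j \<rho> \<bullet> e1) * elt J (\<kappa> t) j \<rho>)
                         (\<lambda>j \<rho>. elt J \<zeta> j \<rho> * norm (eltd J (X t) j))) \<and>
         (\<forall>\<eta>\<in>Vdd per J dD d0 d1 d2.
            ipS lumped J (\<lambda>j \<rho>. ((elt J (X t) j \<rho> \<bullet> e1) * elt J (\<kappa> t) j \<rho>) *\<^sub>R nuh J (X t) j)
                         (\<lambda>j \<rho>. norm (eltd J (X t) j) *\<^sub>R elt J \<eta> j \<rho>)
            + stiff J (X t) \<eta>
          = bdry_rhs J d1 d2 rh (X t) \<eta>))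
      \<longrightarrow> (\<forall>t\<in>{0<..T}.
            ((\<lambda>s. energy J d1 d2 rh (X s)) has_real_derivative
               - 2 * pi * ipS lumped J (\<lambda>j \<rho>. (elt J (X t) j \<rho> \<bullet> e1) * (elt J (\<kappa> t) j \<rho>)\<^sup>2)
                                      (\<lambda>j \<rho>. norm (eltd J (X t) j)))
              (at t within {0..T}) \<and>
            ipS lumped J (\<lambda>j \<rho>. (elt J (X t) j \<rho> \<bullet> e1) * (elt J (\<kappa> t) j \<rho>)\<^sup>2)
                         (\<lambda>j \<rho>. norm (eltd J (X t) j)) \<ge> 0))
  \<and>
    (\<forall>\<kappa> :: real \<Rightarrow> nat \<Rightarrow> real \<times> real.
      (\<forall>t\<in>{0<..T}.
         (\<lambda>j. fst (\<kappa> t j)) \<in> WS lumped per J d0 \<and> (\<lambda>j. snd (\<kappa> t j)) \<in> WS lumped per J d0 \<and>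
         (\<forall>\<zeta> :: nat \<Rightarrow> real \<times> real.
            (\<lambda>j. fst (\<zeta> j)) \<in> WS lumped per J d0 \<and> (\<lambda>j. snd (\<zeta> j)) \<in> WS lumped per J d0 \<longrightarrow>
            ipS lumped J (\<lambda>j \<rho>. (elt J (X t) j \<rho> \<bullet> e1) *\<^sub>R elt J (Xt t) j \<rho>)
                         (\<lambda>j \<rho>. norm (eltd J (X t) j) *\<^sub>R elt J \<zeta> j \<rho>)
          = ipS lumped J (\<lambda>j \<rho>. (elt J (X t) j \<rho> \<bullet> e1) *\<^sub>R elt J (\<kappa> t) j \<rho>)
                         (\<lambda>j \<rho>. norm (eltd J (X t) j) *\<^sub>R elt J \<zeta> j \<rho>)) \<and>
         (\<forall>\<eta>\<in>Vdd per J dD d0 d1 d2.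
            ipS lumped J (\<lambda>j \<rho>. (elt J (X t) j \<rho> \<bullet> e1) *\<^sub>R elt J (\<kappa> t) j \<rho>)
                         (\<lambda>j \<rho>. norm (eltd J (X t) j) *\<^sub>R elt J \<eta> j \<rho>)
            + stiff J (X t) \<eta>
          = bdry_rhs J d1 d2 rh (X t) \<eta>))
      \<longrightarrow> (\<forall>t\<in>{0<..T}.
            ((\<lambda>s. energy J d1 d2 rh (X s)) has_real_derivative
               - 2 * pi * ipS lumped J (\<lambda>j \<rho>. (elt J (X t) j \<rho> \<bullet> e1) * (norm (elt J (\<kappa> t) j \<rho>))\<^sup>2)
                                      (\<lambda>j \<rho>. norm (eltd J (X t) j)))
              (at t within {0..T}) \<and>
            ipS lumped J (\<lambda>j \<rho>. (elt J (X t) j \<rho> \<bullet> e1) * (norm (elt J (\<kappa> t) j \<rho>))\<^sup>2)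
                         (\<lambda>j \<rho>. norm (eltd J (X t) j)) \<ge> 0))"
proof -
  have J: "J > 0" using J3 by simp
  have d12: "d1 \<subseteq> {0..1}" "d2 \<subseteq> {0..1}"
    using bp by (auto simp: boundary_partition_def split: if_splits)
  have energy_rate: "((\<lambda>s. energy J d1 d2 rh (X s)) has_real_derivative
           2 * pi * (stiff J (X t) (Xt t) - bdry_rhs J d1 d2 rh (X t) (Xt t))) (at t within {0..T})"
    if "t \<in> {0<..T}" for t
    using that Xderiv Xnondeg XtV by (intro energy_has_derivative[OF J _ _ d12]) (auto simp: Vdd_def)
  show ?thesis
    apply (intro conjI allI impI ballI)
    subgoal premises H for \<kappa> t
      using energy_rate[OF H(2)] H(1)[rule_format, OF H(2)] XtV H(2)
        dissipation_scalar[of lumped J "X t" "Xt t" "\<kappa> t" d1 d2 rh]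
      by auto
    subgoal
      using XV Xpos by (intro ipS_radius_weighted_nonneg[OF J]) (auto simp: elt_def intro!: continuous_intros)
    subgoal premises H for \<kappa> t
      using energy_rate[OF H(2)] H(1)[rule_format, OF H(2)] XtV H(2)
        dissipation_vector[of lumped J "X t" "Xt t" "\<kappa> t" d1 d2 rh]
      by auto
    subgoal
      using XV Xpos by (intro ipS_radius_weighted_nonneg[OF J]) (auto simp: elt_def intro!: continuous_intros)
    done
qed

end
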